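(* Let $B\to K\leftarrow C$ be ring homomorphisms with $C\to K$ surjective, $A=B\times_K C$, and $X=\mathrm{Spec}\,A$, $Y=\mathrm{Spec}\,B$, $Z=\mathrm{Spec}\,C$, $T=\mathrm{Spec}\,K$, with the induced morphisms ($Y\to X$ is the closed immersion defined by the kernel of $A\to B$, $T\to Z$ the closed immersion). Let $R$ be a valuation ring which is not a field, $S=\mathrm{Spec}\,R$ with closed point $s$, and $f:S\to X$ a morphism with $f^{-1}(Y)=\{s\}$. Then $f$ admits a unique lifting $g:S\to Z$ (i.e., $f$ is the composition of $g$ with $Z\to X$), and this lifting satisfies $g^{-1}(T)=\{s\}$. *)

theory Defs
  imports "HOL-Algebra.Algebra"
begin

definition fibre_ring ::
  "('b, 'm) ring_scheme \<Rightarrow> ('c, 'n) ring_scheme \<Rightarrow> ('b \<Rightarrow> 'k) \<Rightarrow> ('c \<Rightarrow> 'k) \<Rightarrow> ('b \<times> 'c) ring" where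
  "fibre_ring B C \<beta> \<gamma> =
     \<lparr>partial_object.carrier = {(b, c). b \<in> carrier B \<and> c \<in> carrier C \<and> \<beta> b = \<gamma> c},
      monoid.mult = (\<lambda>x y. (fst x \<otimes>\<^bsub>B\<^esub> fst y, snd x \<otimes>\<^bsub>C\<^esub> snd y)),
      monoid.one = (\<one>\<^bsub>B\<^esub>, \<one>\<^bsub>C\<^esub>),
      ring.zero = (\<zero>\<^bsub>B\<^esub>, \<zero>\<^bsub>C\<^esub>),
      ring.add = (\<lambda>x y. (fst x \<oplus>\<^bsub>B\<^esub> fst y, snd x \<oplus>\<^bsub>C\<^esub> snd y))\<rparr>"

definition Spec_pts :: "('a, 'm) ring_scheme \<Rightarrow> 'a set set" where
  "Spec_pts R = {P. primeideal P R}"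

definition Spec_map :: "('a, 'm) ring_scheme \<Rightarrow> ('a \<Rightarrow> 'r) \<Rightarrow> 'r set \<Rightarrow> 'a set" where
  "Spec_map A \<phi> P = {a \<in> carrier A. \<phi> a \<in> P}"

definition valuation_ring :: "('a, 'm) ring_scheme \<Rightarrow> bool" where
  "valuation_ring R \<longleftrightarrow> domain R \<and>
     (\<forall>a \<in> carrier R. \<forall>b \<in> carrier R.
        (\<exists>c \<in> carrier R. b = a \<otimes>\<^bsub>R\<^esub> c) \<or> (\<exists>c \<in> carrier R. a = b \<otimes>\<^bsub>R\<^esub> c))"

end

theory Submission
  imports Defs
begin

text \<open>Since \<open>\<gamma>\<close> is surjective, so is the projection \<open>A \<rightarrow> B\<close>, whose kernel is
  \<open>0 \<times> I\<close> with \<open>I = ker \<gamma>\<close>. For a surjection, a prime lies in the image of the induced map on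
  spectra exactly when it contains the kernel; so the hypothesis says that the maximal ideal is
  the only prime of \<open>R\<close> containing \<open>\<phi>(0 \<times> I)\<close>, and the conclusion about \<open>g\<^sup>-\<^sup>1(T)\<close> follows
  once \<open>\<psi>(I) = \<phi>(0 \<times> I)\<close>.

  As \<open>R\<close> is not a field, some \<open>t = \<phi>(0, c\<^sub>0)\<close> with \<open>c\<^sub>0 \<in> I\<close> is non-zero, and the lift must be
  \<open>\<psi>(c) = \<phi>(0, c c\<^sub>0) / t\<close>. The point is that \<open>t\<close> divides \<open>s = \<phi>(0, c c\<^sub>0)\<close>: otherwise
  \<open>t = s v\<close> with \<open>v \<noteq> 0\<close> a non-unit, and \<open>s \<phi>(0, e) = t \<phi>(0, c e)\<close> gives
  \<open>\<phi>(0, e) = v \<phi>(0, c e)\<close> for all \<open>e \<in> I\<close>. So \<open>\<phi>(0 \<times> I)\<close> lies in the set of elements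
  divisible by every power of \<open>v\<close>, which in a valuation ring is a prime ideal not containing
  \<open>v\<close>, hence not maximal.\<close>

section \<open>Spectra and surjective homomorphisms\<close>

lemma (in ring_hom_ring) mem_ideal_if_hom_eq:
  assumes "ideal I R" "a_kernel R S h \<subseteq> I" "a \<in> I" "x \<in> carrier R" "h x = h a"
  shows "x \<in> I"
proof -
  interpret I: ideal I R by fact
  have "x \<in> a_kernel R S h +> a"
    using homeq_imp_rcos[OF I.Icarr[OF assms(3)] assms(4,5)] .
  then obtain k where "k \<in> a_kernel R S h" "x = k \<oplus> a"
    by (auto simp: a_r_coset_defs)
  with assms(2,3) show ?thesis by blast
qed

lemma (in ring_hom_ring) ideal_image_if_surj:
  assumes surj: "h ` carrier R = carrier S" and I: "ideal I R"
  shows "ideal (h ` I) S"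
proof -
  interpret I: ideal I R by fact
  have lift: "\<exists>x\<in>carrier R. y = h x" if "y \<in> carrier S" for y
    using surj that by auto
  show ?thesis
  proof (rule idealI[OF S.ring_axioms])
    show "subgroup (h ` I) (add_monoid S)"
      by (rule group_hom.subgroup_img_is_subgroup[OF a_group_hom I.a_subgroup])
    show "x \<otimes>\<^bsub>S\<^esub> a \<in> h ` I" if a: "a \<in> h ` I" and x: "x \<in> carrier S" for a x
    proof -
      obtain p where p: "p \<in> I" "a = h p" using a by blast
      obtain r where r: "r \<in> carrier R" "x = h r" using lift[OF x] by blast
      have "x \<otimes>\<^bsub>S\<^esub> a = h (r \<otimes> p)" using p r I.Icarr by simp
      then show ?thesis using I.I_l_closed[OF p(1) r(1)] by blast
    qed
    show "a \<otimes>\<^bsub>S\<^esub> x \<in> h ` I" if a: "a \<in> h ` I" and x: "x \<in> carrier S" for a x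
    proof -
      obtain p where p: "p \<in> I" "a = h p" using a by blast
      obtain r where r: "r \<in> carrier R" "x = h r" using lift[OF x] by blast
      have "a \<otimes>\<^bsub>S\<^esub> x = h (p \<otimes> r)" using p r I.Icarr by simp
      then show ?thesis using I.I_r_closed[OF p(1) r(1)] by blast
    qed
  qed
qed

lemma (in ring_hom_cring) primeideal_image_if_kernel_subset:
  assumes surj: "h ` carrier R = carrier S"
    and P: "primeideal P R" and ker: "a_kernel R S h \<subseteq> P"
  shows "primeideal (h ` P) S" and "Spec_map R h (h ` P) = P"
proof -
  interpret P: primeideal P R by fact
  have mem_iff: "h x \<in> h ` P \<longleftrightarrow> x \<in> P" if "x \<in> carrier R" for x
    using ring.mem_ideal_if_hom_eq[OF P.is_ideal ker _ that] by auto
  show "Spec_map R h (h ` P) = P"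
    unfolding Spec_map_def using mem_iff P.a_subset by auto
  have lift: "\<exists>x\<in>carrier R. y = h x" if "y \<in> carrier S" for y
    using surj that by auto
  show "primeideal (h ` P) S"
  proof (rule primeidealI[OF _ S.is_cring])
    show "ideal (h ` P) S"
      by (rule ring.ideal_image_if_surj[OF surj P.is_ideal])
    show "carrier S \<noteq> h ` P"
    proof
      assume "carrier S = h ` P"
      then have "\<one> \<in> P" using mem_iff[OF R.one_closed] S.one_closed by simp
      then show False using P.I_notcarr P.one_imp_carrier by blast
    qed
    show "a \<in> h ` P \<or> b \<in> h ` P"
      if a: "a \<in> carrier S" and b: "b \<in> carrier S" and ab: "a \<otimes>\<^bsub>S\<^esub> b \<in> h ` P" for a b
    proof -
      obtain x where x: "x \<in> carrier R" "a = h x" using lift[OF a] by blast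
      obtain y where y: "y \<in> carrier R" "b = h y" using lift[OF b] by blast
      note xy = x y
      have "h (x \<otimes> y) \<in> h ` P" using ab xy by simp
      then have "x \<otimes> y \<in> P" using mem_iff[OF R.m_closed[OF x(1) y(1)]] by blast
      then show ?thesis using xy mem_iff P.I_prime by blast
    qed
  qed
qed

lemma (in ring_hom_cring) Spec_map_image_iff:
  assumes surj: "h ` carrier R = carrier S" and P: "primeideal P R"
  shows "P \<in> Spec_map R h ` Spec_pts S \<longleftrightarrow> a_kernel R S h \<subseteq> P"
proof
  assume "P \<in> Spec_map R h ` Spec_pts S"
  then obtain Q where Q: "primeideal Q S" and P_eq: "P = Spec_map R h Q"
    by (auto simp: Spec_pts_def)
  show "a_kernel R S h \<subseteq> P"
  proof
    fix x assume "x \<in> a_kernel R S h"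
    then have "x \<in> carrier R" "h x = \<zero>\<^bsub>S\<^esub>" unfolding a_kernel_def' by simp_all
    moreover have "\<zero>\<^bsub>S\<^esub> \<in> Q" using Q by (simp add: primeideal_def ideal.axioms(1)
        additive_subgroup.zero_closed)
    ultimately show "x \<in> P" by (simp add: P_eq Spec_map_def)
  qed
next
  assume "a_kernel R S h \<subseteq> P"
  then show "P \<in> Spec_map R h ` Spec_pts S"
    using primeideal_image_if_kernel_subset[OF surj P]
    by (metis Spec_pts_def image_eqI mem_Collect_eq)
qed

lemma (in ring_hom_cring) Spec_map_vimage_in_image_iff:
  assumes surj: "h ` carrier R = carrier S"
    and f: "f \<in> ring_hom R T" and T: "cring T" and P: "primeideal P T"
  shows "Spec_map R f P \<in> Spec_map R h ` Spec_pts S \<longleftrightarrow> f ` a_kernel R S h \<subseteq> P"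
proof -
  interpret f: ring_hom_ring R T f
    using f T R.ring_axioms
    by (intro ring_hom_ring.intro ring_hom_ring_axioms.intro) (auto intro: cring.axioms)
  have "primeideal (Spec_map R f P) R"
    unfolding Spec_map_def by (rule f.primeideal_vimage[OF R.is_cring P])
  then have "Spec_map R f P \<in> Spec_map R h ` Spec_pts S \<longleftrightarrow> a_kernel R S h \<subseteq> Spec_map R f P"
    by (rule Spec_map_image_iff[OF surj])
  also have "\<dots> \<longleftrightarrow> f ` a_kernel R S h \<subseteq> P"
    using ideal.Icarr[OF ring.kernel_is_ideal] unfolding Spec_map_def by blast
  finally show ?thesis .
qed

section \<open>Valuation rings\<close>

definition pow_divisible :: "('a, 'm) ring_scheme \<Rightarrow> 'a \<Rightarrow> 'a set" where
  "pow_divisible R v = {r \<in> carrier R. \<forall>n::nat. v [^]\<^bsub>R\<^esub> n divides\<^bsub>R\<^esub> r}"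

lemma valuation_ring_divides_cases:
  assumes "valuation_ring R" "a \<in> carrier R" "b \<in> carrier R"
  shows "a divides\<^bsub>R\<^esub> b \<or> b divides\<^bsub>R\<^esub> a"
  using assms unfolding valuation_ring_def factor_def by blast

lemma (in domain) Units_if_pow_Suc_divides_pow:
  assumes v: "v \<in> carrier R" "v \<noteq> \<zero>" and dvd: "v [^] Suc n divides v [^] n"
  shows "v \<in> Units R"
proof -
  obtain w where w: "w \<in> carrier R" "v [^] n = v [^] Suc n \<otimes> w"
    using dvd by (auto simp: factor_def)
  have "v [^] n \<otimes> \<one> = v [^] n \<otimes> (v \<otimes> w)"
    using v w by (simp add: m_assoc)
  moreover have "v [^] n \<noteq> \<zero>"
  proof (induction n)
    case (Suc n)
    then show ?case using v by (simp add: integral_iff)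
  qed simp
  ultimately have "\<one> = v \<otimes> w"
    using m_lcancel[OF _ nat_pow_closed[OF v(1)] one_closed m_closed[OF v(1) w(1)]] by blast
  then show ?thesis
    using Unit_eq_dividesone[OF v(1)] dividesI[OF w(1)] by blast
qed

lemma (in domain) not_in_pow_divisible:
  assumes "v \<in> carrier R" "v \<notin> Units R" "v \<noteq> \<zero>"
  shows "v \<notin> pow_divisible R v"
proof
  assume "v \<in> pow_divisible R v"
  then have "v [^] Suc 1 divides v"
    unfolding pow_divisible_def by blast
  then have "v [^] Suc 1 divides v [^] (1::nat)"
    using assms(1) by (simp only: nat_pow_eone)
  then show False
    using assms Units_if_pow_Suc_divides_pow by blast
qed

lemma (in domain) pow_divisible_not_maximalideal:
  assumes v: "v \<in> carrier R" "v \<notin> Units R" "v \<noteq> \<zero>"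
  shows "\<not> maximalideal (pow_divisible R v) R"
proof
  assume max: "maximalideal (pow_divisible R v) R"
  have "pow_divisible R v \<subseteq> PIdl v"
  proof
    fix r assume "r \<in> pow_divisible R v"
    then have "r \<in> carrier R" "v [^] (1::nat) divides r"
      unfolding pow_divisible_def by blast+
    then show "r \<in> PIdl v"
      using v(1) to_contain_is_to_divide cgenideal_self by (metis nat_pow_eone subsetD)
  qed
  moreover have "PIdl v \<subseteq> carrier R"
    using additive_subgroup.a_subset[OF ideal.axioms(1)[OF cgenideal_ideal[OF v(1)]]] .
  ultimately have "PIdl v = pow_divisible R v \<or> PIdl v = carrier R"
    using maximalideal.I_maximal[OF max cgenideal_ideal[OF v(1)]] by blast
  moreover have "v \<in> PIdl v"
    by (rule cgenideal_self[OF v(1)])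
  moreover have "PIdl v \<noteq> carrier R"
    using ideal_eq_carrier_iff[OF v(1)] v(2) by blast
  ultimately show False
    using not_in_pow_divisible[OF v] by blast
qed

lemma (in cring) mem_cgenideal_iff_divides:
  assumes "a \<in> carrier R"
  shows "r \<in> PIdl a \<longleftrightarrow> r \<in> carrier R \<and> a divides r"
  using assms m_comm unfolding cgenideal_def factor_def by blast

lemma (in cring) pow_divisible_ideal:
  assumes "v \<in> carrier R"
  shows "ideal (pow_divisible R v) R"
proof -
  have "pow_divisible R v = \<Inter> (range (\<lambda>n::nat. PIdl (v [^] n)))"
    using mem_cgenideal_iff_divides[OF nat_pow_closed[OF assms]]
    unfolding pow_divisible_def by blast
  moreover have "ideal (\<Inter> (range (\<lambda>n::nat. PIdl (v [^] n)))) R"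
    by (rule i_Intersect) (use cgenideal_ideal[OF nat_pow_closed[OF assms]] in auto)
  ultimately show ?thesis by simp
qed

lemma (in domain) valuation_ring_pow_divisible_primeideal:
  assumes val: "valuation_ring R" and v: "v \<in> carrier R" "v \<notin> Units R" "v \<noteq> \<zero>"
  shows "primeideal (pow_divisible R v) R"
proof -
  have dvd_iff: "r \<in> pow_divisible R v \<longleftrightarrow> (\<forall>n::nat. v [^] n divides r)" if "r \<in> carrier R" for r
    using that by (simp add: pow_divisible_def)
  show ?thesis
  proof (rule primeidealI[OF _ is_cring])
    show "ideal (pow_divisible R v) R"
      by (rule pow_divisible_ideal[OF v(1)])
    show "carrier R \<noteq> pow_divisible R v"
      using v not_in_pow_divisible by blast
    show "a \<in> pow_divisible R v \<or> b \<in> pow_divisible R v"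
      if a: "a \<in> carrier R" and b: "b \<in> carrier R" and ab: "a \<otimes> b \<in> pow_divisible R v" for a b
    proof (rule ccontr)
      assume "\<not> ?thesis"
      then have "a \<notin> pow_divisible R v" "b \<notin> pow_divisible R v" by blast+
      then obtain k l :: nat where "\<not> v [^] k divides a" "\<not> v [^] l divides b"
        using dvd_iff[OF a] dvd_iff[OF b] by blast
      then have "a divides v [^] k" "b divides v [^] l"
        using valuation_ring_divides_cases[OF val nat_pow_closed[OF v(1)] a, of k]
          valuation_ring_divides_cases[OF val nat_pow_closed[OF v(1)] b, of l] by blast+
      then obtain c d where c: "c \<in> carrier R" "v [^] k = a \<otimes> c"
        and d: "d \<in> carrier R" "v [^] l = b \<otimes> d"
        by (auto simp: factor_def)
      have "v [^] (k + l) = (a \<otimes> b) \<otimes> (c \<otimes> d)"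
        using a b c d v(1) by (simp add: nat_pow_mult[symmetric] m_ac)
      then have "a \<otimes> b divides v [^] (k + l)"
        using a b c d by (intro dividesI[of "c \<otimes> d"]) simp_all
      moreover have "v [^] Suc (k + l) divides a \<otimes> b"
        using ab dvd_iff[OF m_closed[OF a b]] by blast
      ultimately have "v [^] Suc (k + l) divides v [^] (k + l)"
        using divides_trans nat_pow_closed[OF v(1)] by blast
      then show False
        using v Units_if_pow_Suc_divides_pow by blast
    qed
  qed
qed

lemma (in cring) subset_pow_divisible_if_shift:
  assumes M: "M \<subseteq> carrier R" and v: "v \<in> carrier R"
    and shift: "\<And>m. m \<in> M \<Longrightarrow> \<exists>m'\<in>M. m = v \<otimes> m'"
  shows "M \<subseteq> pow_divisible R v"
proof -
  have "\<forall>m\<in>M. v [^] n divides m" for n :: nat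
  proof (induction n)
    case 0
    show ?case using M by (auto intro: unit_divides)
  next
    case (Suc n)
    show ?case
    proof
      fix m assume "m \<in> M"
      then obtain m' where m': "m' \<in> M" "m = v \<otimes> m'" using shift by blast
      then have "v \<otimes> v [^] n divides v \<otimes> m'"
        using Suc M v by (intro divides_mult_lI) auto
      then show "v [^] Suc n divides m"
        using m' v by (simp only: nat_pow_Suc2)
    qed
  qed
  then show ?thesis using M by (auto simp: pow_divisible_def)
qed

lemma (in domain) valuation_ring_divides_if_scaled:
  assumes val: "valuation_ring R" and M: "M \<subseteq> carrier R"
    and max: "\<And>P. primeideal P R \<Longrightarrow> M \<subseteq> P \<Longrightarrow> maximalideal P R"
    and t: "t \<in> carrier R" "t \<noteq> \<zero>" and s: "s \<in> carrier R"
    and scaled: "\<And>m. m \<in> M \<Longrightarrow> \<exists>m'\<in>M. s \<otimes> m = t \<otimes> m'"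
  shows "t divides s"
proof (rule ccontr)
  assume not_dvd: "\<not> t divides s"
  then obtain v where v: "v \<in> carrier R" "t = s \<otimes> v"
    using valuation_ring_divides_cases[OF val t(1) s] by (auto simp: factor_def)
  have s_nz: "s \<noteq> \<zero>" and v_nz: "v \<noteq> \<zero>"
    using v t s by auto
  have v_nu: "v \<notin> Units R"
  proof
    assume "v \<in> Units R"
    then have "s = t \<otimes> inv v"
      using v s by (simp add: m_assoc)
    then show False
      using not_dvd dividesI[OF Units_inv_closed[OF \<open>v \<in> Units R\<close>]] by blast
  qed
  have "\<exists>m'\<in>M. m = v \<otimes> m'" if m: "m \<in> M" for m
  proof -
    obtain m' where m': "m' \<in> M" "s \<otimes> m = t \<otimes> m'" using scaled[OF m] by blast
    then have "s \<otimes> m = s \<otimes> (v \<otimes> m')"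
      using v s M by (simp add: m_assoc subsetD)
    then have "m = v \<otimes> m'"
      using m_lcancel[OF s_nz s] m m' M v by (simp add: subsetD)
    then show ?thesis using m' by blast
  qed
  then have "M \<subseteq> pow_divisible R v"
    by (rule subset_pow_divisible_if_shift[OF M v(1)])
  then show False
    using max valuation_ring_pow_divisible_primeideal[OF val v(1) v_nu v_nz]
      pow_divisible_not_maximalideal[OF v(1) v_nu v_nz] by blast
qed

section \<open>Homomorphisms into a domain\<close>

lemma (in domain) ring_hom_divided_by:
  assumes t: "t \<in> carrier R" "t \<noteq> \<zero>"
    and dvd: "\<And>x. x \<in> carrier C \<Longrightarrow> t divides \<theta> x"
    and add: "\<And>x y. x \<in> carrier C \<Longrightarrow> y \<in> carrier C \<Longrightarrow> \<theta> (x \<oplus>\<^bsub>C\<^esub> y) = \<theta> x \<oplus> \<theta> y"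
    and mult: "\<And>x y. x \<in> carrier C \<Longrightarrow> y \<in> carrier C \<Longrightarrow> \<theta> x \<otimes> \<theta> y = t \<otimes> \<theta> (x \<otimes>\<^bsub>C\<^esub> y)"
    and one: "\<theta> \<one>\<^bsub>C\<^esub> = t"
    and C: "ring C"
  obtains \<psi> where "\<psi> \<in> ring_hom C R" "\<And>x. x \<in> carrier C \<Longrightarrow> \<theta> x = t \<otimes> \<psi> x"
proof -
  interpret C: ring C by (rule C)
  define \<psi> where "\<psi> x = (SOME q. q \<in> carrier R \<and> \<theta> x = t \<otimes> q)" for x
  have \<psi>: "\<psi> x \<in> carrier R" "\<theta> x = t \<otimes> \<psi> x" if "x \<in> carrier C" for x
    using someI_ex[OF dvd[OF that, unfolded factor_def, simplified Bex_def]]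
    unfolding \<psi>_def by blast+
  have \<psi>_eqI: "\<psi> x = q" if "x \<in> carrier C" "q \<in> carrier R" "\<theta> x = t \<otimes> q" for x q
    using \<psi>[OF that(1)] that(2,3) m_lcancel[OF t(2) t(1)] by simp
  have "\<psi> \<in> ring_hom C R"
  proof (rule ring_hom_memI)
    fix x y assume x: "x \<in> carrier C" and y: "y \<in> carrier C"
    show "\<psi> x \<in> carrier R" by (rule \<psi>(1)[OF x])
    have "t \<otimes> (t \<otimes> \<psi> (x \<otimes>\<^bsub>C\<^esub> y)) = t \<otimes> (t \<otimes> (\<psi> x \<otimes> \<psi> y))"
      using mult[OF x y] \<psi>[OF x] \<psi>[OF y] \<psi>[OF C.m_closed[OF x y]] t(1) by (simp add: m_ac)
    then show "\<psi> (x \<otimes>\<^bsub>C\<^esub> y) = \<psi> x \<otimes> \<psi> y"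
      using m_lcancel[OF t(2) t(1)] t(1) \<psi>[OF x] \<psi>[OF y] \<psi>[OF C.m_closed[OF x y]] by simp
    show "\<psi> (x \<oplus>\<^bsub>C\<^esub> y) = \<psi> x \<oplus> \<psi> y"
      using add[OF x y] \<psi>[OF x] \<psi>[OF y] t(1) x y by (intro \<psi>_eqI) (simp_all add: r_distr)
  next
    show "\<psi> \<one>\<^bsub>C\<^esub> = \<one>"
      using one t(1) by (intro \<psi>_eqI) simp_all
  qed
  with \<psi> show ?thesis using that by blast
qed

lemma (in domain) ring_hom_eq_if_eq_on_multiples:
  assumes \<psi>: "\<psi> \<in> ring_hom C R" and \<psi>': "\<psi>' \<in> ring_hom C R" and C: "ring C"
    and c\<^sub>0: "c\<^sub>0 \<in> carrier C" "\<psi> c\<^sub>0 \<noteq> \<zero>"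
    and eq: "\<And>c. c \<in> carrier C \<Longrightarrow> \<psi> (c\<^sub>0 \<otimes>\<^bsub>C\<^esub> c) = \<psi>' (c\<^sub>0 \<otimes>\<^bsub>C\<^esub> c)"
    and c: "c \<in> carrier C"
  shows "\<psi> c = \<psi>' c"
proof -
  interpret C: ring C by (rule C)
  have "\<psi> c\<^sub>0 = \<psi>' c\<^sub>0"
    using eq[OF C.one_closed] c\<^sub>0(1) by simp
  then have "\<psi> c\<^sub>0 \<otimes> \<psi> c = \<psi> c\<^sub>0 \<otimes> \<psi>' c"
    using eq[OF c] c\<^sub>0(1) c ring_hom_mult[OF \<psi>] ring_hom_mult[OF \<psi>'] by simp
  then show ?thesis
    using m_lcancel[OF c\<^sub>0(2)] ring_hom_closed[OF \<psi>] ring_hom_closed[OF \<psi>'] c\<^sub>0(1) c by simp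
qed

section \<open>Fibre products of rings\<close>

lemma fibre_ring_carrier_iff [simp]:
  "x \<in> carrier (fibre_ring B C \<beta> \<gamma>)
     \<longleftrightarrow> fst x \<in> carrier B \<and> snd x \<in> carrier C \<and> \<beta> (fst x) = \<gamma> (snd x)"
  by (cases x) (simp add: fibre_ring_def)

lemma fibre_ring_ops [simp]:
  "x \<otimes>\<^bsub>fibre_ring B C \<beta> \<gamma>\<^esub> y = (fst x \<otimes>\<^bsub>B\<^esub> fst y, snd x \<otimes>\<^bsub>C\<^esub> snd y)"
  "x \<oplus>\<^bsub>fibre_ring B C \<beta> \<gamma>\<^esub> y = (fst x \<oplus>\<^bsub>B\<^esub> fst y, snd x \<oplus>\<^bsub>C\<^esub> snd y)"
  "\<one>\<^bsub>fibre_ring B C \<beta> \<gamma>\<^esub> = (\<one>\<^bsub>B\<^esub>, \<one>\<^bsub>C\<^esub>)"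
  "\<zero>\<^bsub>fibre_ring B C \<beta> \<gamma>\<^esub> = (\<zero>\<^bsub>B\<^esub>, \<zero>\<^bsub>C\<^esub>)"
  by (simp_all add: fibre_ring_def)

locale fibre_product =
  B: cring B + C: cring C + K: cring K
  for B :: "('b, 'm1) ring_scheme" and C :: "('c, 'm2) ring_scheme"
    and K :: "('k, 'm3) ring_scheme" +
  fixes \<beta> :: "'b \<Rightarrow> 'k" and \<gamma> :: "'c \<Rightarrow> 'k"
  assumes \<beta>_hom: "\<beta> \<in> ring_hom B K" and \<gamma>_hom: "\<gamma> \<in> ring_hom C K"
begin

sublocale \<beta>: ring_hom_cring B K \<beta> by unfold_locales (rule \<beta>_hom)
sublocale \<gamma>: ring_hom_cring C K \<gamma> by unfold_locales (rule \<gamma>_hom)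

abbreviation A where "A \<equiv> fibre_ring B C \<beta> \<gamma>"

lemma fibre_ring_cring: "cring A"
proof (rule cringI)
  show "abelian_group A"
  proof (rule abelian_groupI)
    fix x assume x: "x \<in> carrier A"
    show "\<exists>y\<in>carrier A. y \<oplus>\<^bsub>A\<^esub> x = \<zero>\<^bsub>A\<^esub>"
      by (rule bexI[of _ "(\<ominus>\<^bsub>B\<^esub> fst x, \<ominus>\<^bsub>C\<^esub> snd x)"]) (use x in \<open>auto simp: B.l_neg C.l_neg\<close>)
  qed (auto simp: B.a_ac C.a_ac)
  show "comm_monoid A"
    by (rule comm_monoidI) (auto simp: B.m_ac C.m_ac)
qed (auto simp: B.l_distr C.l_distr)

lemma fst_ring_hom: "fst \<in> ring_hom A B"
  by (rule ring_hom_memI) auto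

lemma fst_image_eq:
  assumes "\<gamma> ` carrier C = carrier K"
  shows "fst ` carrier A = carrier B"
proof (intro equalityI subsetI)
  fix b assume b: "b \<in> carrier B"
  then obtain c where "c \<in> carrier C" "\<gamma> c = \<beta> b"
    using assms by (metis \<beta>.hom_closed imageE)
  with b show "b \<in> fst ` carrier A" by (intro image_eqI[of _ _ "(b, c)"]) auto
qed auto

lemma a_kernel_fst_iff:
  "x \<in> a_kernel A B fst \<longleftrightarrow> fst x = \<zero>\<^bsub>B\<^esub> \<and> snd x \<in> a_kernel C K \<gamma>"
  unfolding a_kernel_def' mem_Collect_eq fibre_ring_carrier_iff
  using \<beta>.hom_zero B.zero_closed by metis

lemma kernel_pair_in_carrier:
  assumes "d \<in> a_kernel C K \<gamma>"
  shows "(\<zero>\<^bsub>B\<^esub>, d) \<in> carrier A"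
  using assms unfolding a_kernel_def' mem_Collect_eq by simp

lemma kernel_mult_closed:
  assumes "d \<in> a_kernel C K \<gamma>" "c \<in> carrier C"
  shows "c \<otimes>\<^bsub>C\<^esub> d \<in> a_kernel C K \<gamma>" "d \<otimes>\<^bsub>C\<^esub> c \<in> a_kernel C K \<gamma>"
  using ideal.I_l_closed[OF \<gamma>.ring.kernel_is_ideal assms]
    ideal.I_r_closed[OF \<gamma>.ring.kernel_is_ideal assms] .

lemma kernel_subset: "a_kernel C K \<gamma> \<subseteq> carrier C"
  using ideal.Icarr[OF \<gamma>.ring.kernel_is_ideal] by blast

lemma kernel_pair_mult:
  assumes \<phi>: "\<phi> \<in> ring_hom A R" and d: "d \<in> a_kernel C K \<gamma>" and y: "y \<in> carrier A"
  shows "\<phi> (\<zero>\<^bsub>B\<^esub>, d) \<otimes>\<^bsub>R\<^esub> \<phi> y = \<phi> (\<zero>\<^bsub>B\<^esub>, d \<otimes>\<^bsub>C\<^esub> snd y)"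
proof -
  have "(\<zero>\<^bsub>B\<^esub>, d) \<otimes>\<^bsub>A\<^esub> y = (\<zero>\<^bsub>B\<^esub>, d \<otimes>\<^bsub>C\<^esub> snd y)"
    using y by simp
  then show ?thesis
    using ring_hom_mult[OF \<phi> kernel_pair_in_carrier[OF d] y] by simp
qed

lemma Spec_map_in_image_fst_iff:
  assumes surj: "\<gamma> ` carrier C = carrier K"
    and R: "cring R" and \<phi>: "\<phi> \<in> ring_hom A R" and P: "primeideal P R"
  shows "Spec_map A \<phi> P \<in> Spec_map A fst ` Spec_pts B \<longleftrightarrow> \<phi> ` a_kernel A B fst \<subseteq> P"
proof -
  interpret fst: ring_hom_cring A B fst
    by (intro ring_hom_cring.intro ring_hom_cring_axioms.intro fibre_ring_cring
        B.is_cring fst_ring_hom)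
  show ?thesis
    by (rule fst.Spec_map_vimage_in_image_iff[OF fst_image_eq[OF surj] \<phi> R P])
qed

lemma exists_kernel_image_nonzero:
  assumes R: "domain R" "\<not> field R" and \<phi>: "\<phi> \<in> ring_hom A R"
    and max: "\<And>P. primeideal P R \<Longrightarrow> \<phi> ` a_kernel A B fst \<subseteq> P \<Longrightarrow> maximalideal P R"
  obtains c\<^sub>0 where "c\<^sub>0 \<in> a_kernel C K \<gamma>" "\<phi> (\<zero>\<^bsub>B\<^esub>, c\<^sub>0) \<noteq> \<zero>\<^bsub>R\<^esub>"
proof -
  have "\<not> maximalideal {\<zero>\<^bsub>R\<^esub>} R"
    using cring.zeromaximalideal_eq_field[of R] R by (simp add: domain_def)
  then have "\<not> \<phi> ` a_kernel A B fst \<subseteq> {\<zero>\<^bsub>R\<^esub>}"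
    using max[OF domain.zeroprimeideal[OF R(1)]] by blast
  then obtain x where "x \<in> a_kernel A B fst" "\<phi> x \<noteq> \<zero>\<^bsub>R\<^esub>" by blast
  then have "snd x \<in> a_kernel C K \<gamma>" "\<phi> (\<zero>\<^bsub>B\<^esub>, snd x) \<noteq> \<zero>\<^bsub>R\<^esub>"
    using a_kernel_fst_iff[of x] by (metis prod.collapse)+
  then show thesis using that by blast
qed

lemma valuation_ring_kernel_image_divides:
  assumes val: "valuation_ring R" and \<phi>: "\<phi> \<in> ring_hom A R"
    and max: "\<And>P. primeideal P R \<Longrightarrow> \<phi> ` a_kernel A B fst \<subseteq> P \<Longrightarrow> maximalideal P R"
    and c\<^sub>0: "c\<^sub>0 \<in> a_kernel C K \<gamma>" "\<phi> (\<zero>\<^bsub>B\<^esub>, c\<^sub>0) \<noteq> \<zero>\<^bsub>R\<^esub>" and c: "c \<in> carrier C"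
  shows "\<phi> (\<zero>\<^bsub>B\<^esub>, c\<^sub>0) divides\<^bsub>R\<^esub> \<phi> (\<zero>\<^bsub>B\<^esub>, c \<otimes>\<^bsub>C\<^esub> c\<^sub>0)"
proof -
  interpret R: domain R using val by (simp add: valuation_ring_def)
  have cc\<^sub>0: "c \<otimes>\<^bsub>C\<^esub> c\<^sub>0 \<in> a_kernel C K \<gamma>"
    by (rule kernel_mult_closed(1)[OF c\<^sub>0(1) c])
  have ker_fst: "(\<zero>\<^bsub>B\<^esub>, d) \<in> a_kernel A B fst" if "d \<in> a_kernel C K \<gamma>" for d
    using that a_kernel_fst_iff by simp
  show ?thesis
  proof (rule R.valuation_ring_divides_if_scaled[OF val _ max])
    show "\<phi> ` a_kernel A B fst \<subseteq> carrier R"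
      using ring_hom_closed[OF \<phi>] unfolding a_kernel_def' by blast
    show "\<phi> (\<zero>\<^bsub>B\<^esub>, c\<^sub>0) \<in> carrier R" "\<phi> (\<zero>\<^bsub>B\<^esub>, c \<otimes>\<^bsub>C\<^esub> c\<^sub>0) \<in> carrier R"
      using ring_hom_closed[OF \<phi> kernel_pair_in_carrier] c\<^sub>0(1) cc\<^sub>0 by blast+
    show "\<phi> (\<zero>\<^bsub>B\<^esub>, c\<^sub>0) \<noteq> \<zero>\<^bsub>R\<^esub>" by (rule c\<^sub>0(2))
    fix m assume "m \<in> \<phi> ` a_kernel A B fst"
    then obtain x where x: "x \<in> a_kernel A B fst" "m = \<phi> x" by (rule imageE)
    then have "fst x = \<zero>\<^bsub>B\<^esub>" "snd x \<in> a_kernel C K \<gamma>"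
      using a_kernel_fst_iff[of x] by blast+
    then obtain e where e: "e \<in> a_kernel C K \<gamma>" "m = \<phi> (\<zero>\<^bsub>B\<^esub>, e)"
      using x(2) by (cases x) simp
    have "\<phi> (\<zero>\<^bsub>B\<^esub>, c \<otimes>\<^bsub>C\<^esub> c\<^sub>0) \<otimes>\<^bsub>R\<^esub> m = \<phi> (\<zero>\<^bsub>B\<^esub>, (c \<otimes>\<^bsub>C\<^esub> c\<^sub>0) \<otimes>\<^bsub>C\<^esub> e)"
      using kernel_pair_mult[OF \<phi> cc\<^sub>0 kernel_pair_in_carrier[OF e(1)]] e(2) by simp
    also have "\<dots> = \<phi> (\<zero>\<^bsub>B\<^esub>, c\<^sub>0 \<otimes>\<^bsub>C\<^esub> (c \<otimes>\<^bsub>C\<^esub> e))"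
      using c c\<^sub>0(1) e(1) kernel_subset by (simp add: C.m_ac subsetD)
    also have "\<dots> = \<phi> (\<zero>\<^bsub>B\<^esub>, c\<^sub>0) \<otimes>\<^bsub>R\<^esub> \<phi> (\<zero>\<^bsub>B\<^esub>, c \<otimes>\<^bsub>C\<^esub> e)"
      using kernel_pair_mult[OF \<phi> c\<^sub>0(1) kernel_pair_in_carrier[OF kernel_mult_closed(1)[OF e(1) c]]]
      by simp
    finally show "\<exists>m'\<in>\<phi> ` a_kernel A B fst.
        \<phi> (\<zero>\<^bsub>B\<^esub>, c \<otimes>\<^bsub>C\<^esub> c\<^sub>0) \<otimes>\<^bsub>R\<^esub> m = \<phi> (\<zero>\<^bsub>B\<^esub>, c\<^sub>0) \<otimes>\<^bsub>R\<^esub> m'"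
      using ker_fst[OF kernel_mult_closed(1)[OF e(1) c]] by blast
  qed
qed

lemma kernel_multiples_mult:
  assumes \<phi>: "\<phi> \<in> ring_hom A R" and c\<^sub>0: "c\<^sub>0 \<in> a_kernel C K \<gamma>"
    and x: "x \<in> carrier C" and y: "y \<in> carrier C"
  shows "\<phi> (\<zero>\<^bsub>B\<^esub>, x \<otimes>\<^bsub>C\<^esub> c\<^sub>0) \<otimes>\<^bsub>R\<^esub> \<phi> (\<zero>\<^bsub>B\<^esub>, y \<otimes>\<^bsub>C\<^esub> c\<^sub>0)
    = \<phi> (\<zero>\<^bsub>B\<^esub>, c\<^sub>0) \<otimes>\<^bsub>R\<^esub> \<phi> (\<zero>\<^bsub>B\<^esub>, (x \<otimes>\<^bsub>C\<^esub> y) \<otimes>\<^bsub>C\<^esub> c\<^sub>0)"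
proof -
  have c\<^sub>0C: "c\<^sub>0 \<in> carrier C" using c\<^sub>0 kernel_subset by blast
  have ker: "c \<otimes>\<^bsub>C\<^esub> c\<^sub>0 \<in> a_kernel C K \<gamma>" if "c \<in> carrier C" for c
    by (rule kernel_mult_closed(1)[OF c\<^sub>0 that])
  have "\<phi> (\<zero>\<^bsub>B\<^esub>, x \<otimes>\<^bsub>C\<^esub> c\<^sub>0) \<otimes>\<^bsub>R\<^esub> \<phi> (\<zero>\<^bsub>B\<^esub>, y \<otimes>\<^bsub>C\<^esub> c\<^sub>0)
      = \<phi> (\<zero>\<^bsub>B\<^esub>, (x \<otimes>\<^bsub>C\<^esub> c\<^sub>0) \<otimes>\<^bsub>C\<^esub> (y \<otimes>\<^bsub>C\<^esub> c\<^sub>0))"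
    using kernel_pair_mult[OF \<phi> ker[OF x] kernel_pair_in_carrier[OF ker[OF y]]] by simp
  also have "\<dots> = \<phi> (\<zero>\<^bsub>B\<^esub>, c\<^sub>0 \<otimes>\<^bsub>C\<^esub> ((x \<otimes>\<^bsub>C\<^esub> y) \<otimes>\<^bsub>C\<^esub> c\<^sub>0))"
    using x y c\<^sub>0C by (simp add: C.m_ac)
  also have "\<dots> = \<phi> (\<zero>\<^bsub>B\<^esub>, c\<^sub>0) \<otimes>\<^bsub>R\<^esub> \<phi> (\<zero>\<^bsub>B\<^esub>, (x \<otimes>\<^bsub>C\<^esub> y) \<otimes>\<^bsub>C\<^esub> c\<^sub>0)"
    using kernel_pair_mult[OF \<phi> c\<^sub>0 kernel_pair_in_carrier[OF ker[OF C.m_closed[OF x y]]]]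
    by simp
  finally show ?thesis .
qed

lemma lift_exists:
  assumes val: "valuation_ring R" and \<phi>: "\<phi> \<in> ring_hom A R"
    and max: "\<And>P. primeideal P R \<Longrightarrow> \<phi> ` a_kernel A B fst \<subseteq> P \<Longrightarrow> maximalideal P R"
    and c\<^sub>0: "c\<^sub>0 \<in> a_kernel C K \<gamma>" "\<phi> (\<zero>\<^bsub>B\<^esub>, c\<^sub>0) \<noteq> \<zero>\<^bsub>R\<^esub>"
  obtains \<psi> where "\<psi> \<in> ring_hom C R" "\<And>x. x \<in> carrier A \<Longrightarrow> \<psi> (snd x) = \<phi> x"
proof -
  interpret R: domain R using val by (simp add: valuation_ring_def)
  define t where "t = \<phi> (\<zero>\<^bsub>B\<^esub>, c\<^sub>0)"
  have c\<^sub>0C: "c\<^sub>0 \<in> carrier C" using c\<^sub>0(1) kernel_subset by blast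
  have t: "t \<in> carrier R" "t \<noteq> \<zero>\<^bsub>R\<^esub>"
    unfolding t_def using ring_hom_closed[OF \<phi> kernel_pair_in_carrier[OF c\<^sub>0(1)]] c\<^sub>0(2) by blast+
  have ker: "c \<otimes>\<^bsub>C\<^esub> c\<^sub>0 \<in> a_kernel C K \<gamma>" if "c \<in> carrier C" for c
    by (rule kernel_mult_closed(1)[OF c\<^sub>0(1) that])
  obtain \<psi> where \<psi>: "\<psi> \<in> ring_hom C R"
    and \<psi>_eq: "\<And>c. c \<in> carrier C \<Longrightarrow> \<phi> (\<zero>\<^bsub>B\<^esub>, c \<otimes>\<^bsub>C\<^esub> c\<^sub>0) = t \<otimes>\<^bsub>R\<^esub> \<psi> c"
  proof (rule R.ring_hom_divided_by[OF t])
    show "t divides\<^bsub>R\<^esub> \<phi> (\<zero>\<^bsub>B\<^esub>, c \<otimes>\<^bsub>C\<^esub> c\<^sub>0)" if "c \<in> carrier C" for c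
      unfolding t_def by (rule valuation_ring_kernel_image_divides[OF val \<phi> max c\<^sub>0 that])
    show "\<phi> (\<zero>\<^bsub>B\<^esub>, (x \<oplus>\<^bsub>C\<^esub> y) \<otimes>\<^bsub>C\<^esub> c\<^sub>0)
        = \<phi> (\<zero>\<^bsub>B\<^esub>, x \<otimes>\<^bsub>C\<^esub> c\<^sub>0) \<oplus>\<^bsub>R\<^esub> \<phi> (\<zero>\<^bsub>B\<^esub>, y \<otimes>\<^bsub>C\<^esub> c\<^sub>0)"
      if "x \<in> carrier C" "y \<in> carrier C" for x y
      using ring_hom_add[OF \<phi> kernel_pair_in_carrier[OF ker[OF that(1)]]
          kernel_pair_in_carrier[OF ker[OF that(2)]]] that c\<^sub>0C
      by (simp add: C.l_distr)
    show "\<phi> (\<zero>\<^bsub>B\<^esub>, x \<otimes>\<^bsub>C\<^esub> c\<^sub>0) \<otimes>\<^bsub>R\<^esub> \<phi> (\<zero>\<^bsub>B\<^esub>, y \<otimes>\<^bsub>C\<^esub> c\<^sub>0)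
        = t \<otimes>\<^bsub>R\<^esub> \<phi> (\<zero>\<^bsub>B\<^esub>, (x \<otimes>\<^bsub>C\<^esub> y) \<otimes>\<^bsub>C\<^esub> c\<^sub>0)"
      if "x \<in> carrier C" "y \<in> carrier C" for x y
      unfolding t_def by (rule kernel_multiples_mult[OF \<phi> c\<^sub>0(1) that])
    show "\<phi> (\<zero>\<^bsub>B\<^esub>, \<one>\<^bsub>C\<^esub> \<otimes>\<^bsub>C\<^esub> c\<^sub>0) = t"
      using c\<^sub>0C by (simp add: t_def)
    show "ring C" by (rule C.ring_axioms)
  qed (rule that)
  have "\<psi> (snd x) = \<phi> x" if x: "x \<in> carrier A" for x
  proof -
    have "t \<otimes>\<^bsub>R\<^esub> \<phi> x = \<phi> (\<zero>\<^bsub>B\<^esub>, c\<^sub>0 \<otimes>\<^bsub>C\<^esub> snd x)"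
      unfolding t_def by (rule kernel_pair_mult[OF \<phi> c\<^sub>0(1) x])
    also have "\<dots> = t \<otimes>\<^bsub>R\<^esub> \<psi> (snd x)"
      using \<psi>_eq[of "snd x"] x c\<^sub>0C by (simp add: C.m_comm)
    finally show ?thesis
      using R.m_lcancel[OF t(2) t(1)] ring_hom_closed[OF \<phi> x] ring_hom_closed[OF \<psi>] x by simp
  qed
  with \<psi> show thesis by (rule that)
qed

lemma lift_unique:
  assumes R: "domain R" and \<psi>: "\<psi> \<in> ring_hom C R" and \<psi>': "\<psi>' \<in> ring_hom C R"
    and lift: "\<And>x. x \<in> carrier A \<Longrightarrow> \<psi> (snd x) = \<phi> x"
    and lift': "\<And>x. x \<in> carrier A \<Longrightarrow> \<psi>' (snd x) = \<phi> x"
    and c\<^sub>0: "c\<^sub>0 \<in> a_kernel C K \<gamma>" "\<phi> (\<zero>\<^bsub>B\<^esub>, c\<^sub>0) \<noteq> \<zero>\<^bsub>R\<^esub>" and c: "c \<in> carrier C"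
  shows "\<psi> c = \<psi>' c"
proof (rule domain.ring_hom_eq_if_eq_on_multiples[OF R \<psi> \<psi>' C.ring_axioms _ _ _ c])
  show "c\<^sub>0 \<in> carrier C" using c\<^sub>0(1) kernel_subset by blast
  show "\<psi> c\<^sub>0 \<noteq> \<zero>\<^bsub>R\<^esub>"
    using lift[OF kernel_pair_in_carrier[OF c\<^sub>0(1)]] c\<^sub>0(2) by simp
  show "\<psi> (c\<^sub>0 \<otimes>\<^bsub>C\<^esub> d) = \<psi>' (c\<^sub>0 \<otimes>\<^bsub>C\<^esub> d)" if "d \<in> carrier C" for d
    using lift[OF kernel_pair_in_carrier] lift'[OF kernel_pair_in_carrier]
      kernel_mult_closed(2)[OF c\<^sub>0(1) that] by simp
qed

lemma Spec_map_lift_in_image_iff: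
  assumes surj: "\<gamma> ` carrier C = carrier K" and R: "cring R"
    and \<phi>: "\<phi> \<in> ring_hom A R" and \<psi>: "\<psi> \<in> ring_hom C R"
    and lift: "\<And>x. x \<in> carrier A \<Longrightarrow> \<psi> (snd x) = \<phi> x" and P: "primeideal P R"
  shows "Spec_map C \<psi> P \<in> Spec_map C \<gamma> ` Spec_pts K
     \<longleftrightarrow> Spec_map A \<phi> P \<in> Spec_map A fst ` Spec_pts B"
proof -
  have "\<psi> ` a_kernel C K \<gamma> = \<phi> ` a_kernel A B fst"
  proof (intro equalityI subsetI)
    fix y assume "y \<in> \<psi> ` a_kernel C K \<gamma>"
    then obtain d where d: "d \<in> a_kernel C K \<gamma>" "y = \<psi> d" by (rule imageE)
    then have "(\<zero>\<^bsub>B\<^esub>, d) \<in> a_kernel A B fst" "y = \<phi> (\<zero>\<^bsub>B\<^esub>, d)"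
      using a_kernel_fst_iff lift[OF kernel_pair_in_carrier[OF d(1)]] by simp_all
    then show "y \<in> \<phi> ` a_kernel A B fst" by blast
  next
    fix y assume "y \<in> \<phi> ` a_kernel A B fst"
    then obtain x where x: "x \<in> a_kernel A B fst" "y = \<phi> x" by (rule imageE)
    then have "x \<in> carrier A" "snd x \<in> a_kernel C K \<gamma>"
      using a_kernel_fst_iff[of x] unfolding a_kernel_def' by blast+
    then show "y \<in> \<psi> ` a_kernel C K \<gamma>" using x(2) lift by (metis image_eqI)
  qed
  then show ?thesis
    using \<gamma>.Spec_map_vimage_in_image_iff[OF surj \<psi> R P]
      Spec_map_in_image_fst_iff[OF surj R \<phi> P] by simp
qed

end

theorem lemma3p3p4:
  fixes B :: "('b, 'm1) ring_scheme" and C :: "('c, 'm2) ring_scheme"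
    and K :: "('k, 'm3) ring_scheme" and R :: "('r, 'm4) ring_scheme"
    and \<beta> :: "'b \<Rightarrow> 'k" and \<gamma> :: "'c \<Rightarrow> 'k" and \<phi> :: "'b \<times> 'c \<Rightarrow> 'r"
  assumes "cring B" and "cring C" and "cring K"
    and "\<beta> \<in> ring_hom B K" and "\<gamma> \<in> ring_hom C K"
    and "\<gamma> ` carrier C = carrier K"
    and "valuation_ring R" and "\<not> field R"
    and "\<phi> \<in> ring_hom (fibre_ring B C \<beta> \<gamma>) R"
    and "{P \<in> Spec_pts R. Spec_map (fibre_ring B C \<beta> \<gamma>) \<phi> P
            \<in> Spec_map (fibre_ring B C \<beta> \<gamma>) fst ` Spec_pts B}
         = {P \<in> Spec_pts R. maximalideal P R}"
  shows "\<exists>\<psi> \<in> ring_hom C R.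
           (\<forall>x \<in> carrier (fibre_ring B C \<beta> \<gamma>). \<psi> (snd x) = \<phi> x)
         \<and> (\<forall>\<psi>' \<in> ring_hom C R.
              (\<forall>x \<in> carrier (fibre_ring B C \<beta> \<gamma>). \<psi>' (snd x) = \<phi> x)
              \<longrightarrow> (\<forall>c \<in> carrier C. \<psi>' c = \<psi> c))
         \<and> {P \<in> Spec_pts R. Spec_map C \<psi> P \<in> Spec_map C \<gamma> ` Spec_pts K}
             = {P \<in> Spec_pts R. maximalideal P R}"
proof -
  interpret fibre_product B C K \<beta> \<gamma>
    using assms(1-5) by (intro fibre_product.intro fibre_product_axioms.intro)
  note surj = assms(6) and val = assms(7) and \<phi> = assms(9) and over_Y = assms(10)
  have R: "domain R" "cring R"
    using val by (simp_all add: valuation_ring_def domain_def)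
  have max: "maximalideal P R" if "primeideal P R" "\<phi> ` a_kernel A B fst \<subseteq> P" for P
    using over_Y Spec_map_in_image_fst_iff[OF surj R(2) \<phi> that(1)] that
    by (auto simp: Spec_pts_def)
  obtain c\<^sub>0 where c\<^sub>0: "c\<^sub>0 \<in> a_kernel C K \<gamma>" "\<phi> (\<zero>\<^bsub>B\<^esub>, c\<^sub>0) \<noteq> \<zero>\<^bsub>R\<^esub>"
    using exists_kernel_image_nonzero[OF R(1) assms(8) \<phi> max] by blast
  obtain \<psi> where \<psi>: "\<psi> \<in> ring_hom C R" and lift: "\<And>x. x \<in> carrier A \<Longrightarrow> \<psi> (snd x) = \<phi> x"
    using lift_exists[OF val \<phi> max c\<^sub>0] by blast
  show ?thesis
  proof (intro bexI[OF _ \<psi>] conjI ballI impI)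
    show "\<psi> (snd x) = \<phi> x" if "x \<in> carrier A" for x
      using lift[OF that] .
    show "\<psi>' c = \<psi> c"
      if "\<psi>' \<in> ring_hom C R" "\<forall>x\<in>carrier A. \<psi>' (snd x) = \<phi> x" "c \<in> carrier C" for \<psi>' c
      using lift_unique[OF R(1) \<psi> that(1) lift _ c\<^sub>0 that(3)] that(2) by simp
    have "{P \<in> Spec_pts R. Spec_map C \<psi> P \<in> Spec_map C \<gamma> ` Spec_pts K}
        = {P \<in> Spec_pts R. Spec_map A \<phi> P \<in> Spec_map A fst ` Spec_pts B}"
      using Spec_map_lift_in_image_iff[OF surj R(2) \<phi> \<psi> lift] by (auto simp: Spec_pts_def)
    with over_Y show "{P \<in> Spec_pts R. Spec_map C \<psi> P \<in> Spec_map C \<gamma> ` Spec_pts K}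
        = {P \<in> Spec_pts R. maximalideal P R}" by simp
  qed
qed

end
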